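(* Let $d\ge1$. (i) The Brownian-time Brownian motion kernel $$K^{\mathrm{BTBM}}_{t;x}=2\int_0^\infty\frac{e^{-|x|^2/2s}}{(2\pi s)^{d/2}}\frac{e^{-s^2/2t}}{\sqrt{2\pi t}}\,ds,\quad t>0,$$ has spatial Fourier transform $$\hat K^{\mathrm{BTBM}}_{t;\xi}=(2\pi)^{-d/2}e^{\frac t8|\xi|^4}\Big[\frac{2}{\sqrt\pi}\int_{\sqrt{2t}|\xi|^2/4}^\infty e^{-\tau^2}d\tau\Big].$$ (ii) For $\varepsilon>0$, $\vartheta\in\mathbb R$, the $(\varepsilon,\vartheta)$ L-KS kernel $$K^{(\varepsilon,\vartheta)}_{t;x}=\int_{-\infty}^0\frac{e^{i\vartheta s}e^{-|x|^2/2is}}{(2\pi is)^{d/2}}\frac{e^{-s^2/2\varepsilon t}}{\sqrt{2\pi\varepsilon t}}ds+\int_0^\infty\frac{e^{i\vartheta s}e^{-|x|^2/2is}}{(2\pi is)^{d/2}}\frac{e^{-s^2/2\varepsilon t}}{\sqrt{2\pi\varepsilon t}}ds$$ has spatial Fourier transform $\hat K^{(\varepsilon,\vartheta)}_{t;\xi}=(2\pi)^{-d/2}e^{-\frac{\varepsilon t}{8}(-2\vartheta+|\xi|^2)^2}$.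
   Context: The spatial Fourier transform is taken in the symmetric convention $\hat f(\xi)=(2\pi)^{-d/2}\int_{\mathbb R^d}f(x)e^{-i\xi\cdot x}\,dx$. In (ii), $(2\pi is)^{d/2}$ is the principal branch, so that $e^{-|x|^2/2is}/(2\pi is)^{d/2}$ is the free Schrödinger propagator at imaginary time $is$, whose Fourier transform in $x$ is $(2\pi)^{-d/2}e^{-is|\xi|^2/2}$. *)

theory Defs
  imports "HOL-Analysis.Analysis"
begin

definition fourier :: "('a::euclidean_space \<Rightarrow> complex) \<Rightarrow> 'a \<Rightarrow> complex" where
  "fourier f \<xi> = complex_of_real ((2 * pi) powr (- real DIM('a) / 2)) *
      (LINT x|lborel. f x * exp (- \<i> * complex_of_real (\<xi> \<bullet> x)))"

definition btbm_kernel :: "real \<Rightarrow> 'a::euclidean_space \<Rightarrow> real" where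
  "btbm_kernel t x = 2 * (LINT s:{0<..}|lborel.
      exp (- (norm x)\<^sup>2 / (2 * s)) / (2 * pi * s) powr (real DIM('a) / 2)
      * (exp (- s\<^sup>2 / (2 * t)) / sqrt (2 * pi * t)))"

(* (ii) integrand of the (eps,theta) L-KS kernel at time t, imaginary time i s, point x:
   e^{i theta s} e^{-|x|^2/(2 i s)} / (2 pi i s)^{d/2}  *  e^{-s^2/(2 eps t)} / sqrt(2 pi eps t),
   with the principal branch of the complex power. *)
definition lks_integrand :: "real \<Rightarrow> real \<Rightarrow> real \<Rightarrow> real \<Rightarrow> 'a::euclidean_space \<Rightarrow> complex" where
  "lks_integrand \<epsilon> \<theta> t s x =
      exp (\<i> * complex_of_real (\<theta> * s)) * exp (- complex_of_real ((norm x)\<^sup>2) / (2 * \<i> * complex_of_real s))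
      / (2 * complex_of_real pi * \<i> * complex_of_real s) powr complex_of_real (real DIM('a) / 2)
      * complex_of_real (exp (- s\<^sup>2 / (2 * \<epsilon> * t)) / sqrt (2 * pi * \<epsilon> * t))"

(* The L-KS kernel K^{(eps,theta)}_t as a (tempered) distribution acting on a test function phi:
   <K, phi> = int_{-inf}^0 (int K-integrand(s,x) phi(x) dx) ds + int_0^inf (...) ds *)
definition lks_pairing :: "real \<Rightarrow> real \<Rightarrow> real \<Rightarrow> ('a::euclidean_space \<Rightarrow> complex) \<Rightarrow> complex" where
  "lks_pairing \<epsilon> \<theta> t \<phi> =
      (LINT s:{..0}|lborel. (LINT x|lborel. lks_integrand \<epsilon> \<theta> t s x * \<phi> x))
    + (LINT s:{0..}|lborel. (LINT x|lborel. lks_integrand \<epsilon> \<theta> t s x * \<phi> x))"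

end

theory Submission
  imports Defs "HOL-Probability.Probability" "HOL-Complex_Analysis.Complex_Analysis"
begin

text \<open>
  Both kernels are superpositions over s of Gaussians exp(-a |x|^2), with a = 1/(2s) for the
  Brownian-time kernel and a = 1/(2is) for the L-KS kernel. For Re a > 0 the Fourier transform
  of such a Gaussian factors over the coordinates and follows from the real case (the
  characteristic function of the standard normal law) by analytic continuation in a. On the
  imaginary axis the Gaussian is not integrable, so there its transform is taken in the weak
  sense, by pairing with psi, and obtained by letting Re a tend to 0 in the multiplication
  formula. Fubini in (s, x) then reduces (i) to the Laplace transform of a half-normal density,
  which becomes a complementary error function after completing the square, and (ii) to the
  characteristic function of the centred normal law of variance eps t at theta - |xi|^2/2.
\<close>

section \<open>Gaussian integrals on the real line\<close>

lemma normal_density_centred: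
  assumes "0 < v"
  shows "normal_density 0 (sqrt v) s = exp (- s\<^sup>2 / (2 * v)) / sqrt (2 * pi * v)"
  using assms by (simp add: normal_density_def)

lemma integrable_exp_neg_sq:
  fixes c :: real
  assumes "0 < c"
  shows "integrable lborel (\<lambda>u::real. exp (- c * u\<^sup>2))"
proof -
  have "sqrt (pi / c) * normal_density 0 (sqrt (1 / (2 * c))) u = exp (- c * u\<^sup>2)" for u
    using assms normal_density_centred[of "1 / (2 * c)" u] by (simp add: real_sqrt_divide)
  moreover have "integrable lborel (\<lambda>u. sqrt (pi / c) * normal_density 0 (sqrt (1 / (2 * c))) u)"
    using assms by (intro integrable_mult_right integrable_normal_density) simp
  ultimately show ?thesis
    by simp
qed

definition gauss_ft :: "real \<Rightarrow> complex \<Rightarrow> complex" where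
  "gauss_ft \<xi> a = (LINT u|lborel. exp (- a * (of_real u)\<^sup>2) * exp (- \<i> * of_real (\<xi> * u)))"

lemma norm_gauss_ft_integrand:
  "norm (exp (- a * (of_real u)\<^sup>2) * exp (- \<i> * of_real (\<xi> * u))) = exp (- Re a * u\<^sup>2)"
  by (simp add: norm_mult power2_eq_square)

lemma integrable_gauss_ft_integrand:
  assumes "0 < Re a"
  shows "integrable lborel (\<lambda>u. exp (- a * (of_real u)\<^sup>2) * exp (- \<i> * of_real (\<xi> * u)))"
  by (rule Bochner_Integration.integrable_bound[OF integrable_exp_neg_sq[OF assms]])
    (measurable, intro AE_I2, simp only: norm_gauss_ft_integrand, simp)

lemma gauss_ft_of_real:
  fixes c :: real
  assumes c: "0 < c"
  shows "gauss_ft \<xi> (of_real c) = of_real (sqrt (pi / c) * exp (- \<xi>\<^sup>2 / (4 * c)))"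
proof -
  define k where "k = sqrt (2 * c)"
  define t where "t = - \<xi> / k"
  have k: "k > 0" "k\<^sup>2 = 2 * c"
    using c by (auto simp: k_def)
  define f where "f = (\<lambda>x. std_normal_density x *\<^sub>R exp (\<i> * of_real (t * x)))"
  have "char std_normal_distribution t = (LINT x|lborel. f x)"
    unfolding char_def f_def by (rule integral_density) auto
  also have "\<dots> = k *\<^sub>R (LINT u|lborel. f (0 + k * u))"
    using lborel_integral_real_affine[of k f 0] k by simp
  also have "(\<lambda>u. f (0 + k * u)) = (\<lambda>u. of_real (1 / sqrt (2 * pi)) *
      (exp (- of_real c * (of_real u)\<^sup>2) * exp (- \<i> * of_real (\<xi> * u))))"
  proof
    fix u
    have "(k * u)\<^sup>2 / 2 = c * u\<^sup>2" and "t * (k * u) = - \<xi> * u"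
      using k by (simp_all add: t_def power_mult_distrib)
    then have "f (0 + k * u) = of_real (1 / sqrt (2 * pi) * exp (- (c * u\<^sup>2))) * exp (\<i> * of_real (- \<xi> * u))"
      by (simp add: f_def std_normal_density_def scaleR_conv_of_real del: of_real_mult)
    then show "f (0 + k * u) = of_real (1 / sqrt (2 * pi)) *
        (exp (- of_real c * (of_real u)\<^sup>2) * exp (- \<i> * of_real (\<xi> * u)))"
      by (simp add: exp_of_real[symmetric])
  qed
  finally have "char std_normal_distribution t = of_real (k / sqrt (2 * pi)) * gauss_ft \<xi> (of_real c)"
    by (simp add: gauss_ft_def scaleR_conv_of_real)
  then have char: "of_real (k / sqrt (2 * pi)) * gauss_ft \<xi> (of_real c) = of_real (exp (- \<xi>\<^sup>2 / (4 * c)))"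
    using k c by (simp add: char_std_normal_distribution t_def power_divide)
  have one: "sqrt (pi / c) * (k / sqrt (2 * pi)) = 1"
    using c by (simp add: k_def real_sqrt_divide real_sqrt_mult)
  have "gauss_ft \<xi> (of_real c) = of_real (sqrt (pi / c) * (k / sqrt (2 * pi))) * gauss_ft \<xi> (of_real c)"
    by (simp only: one of_real_1 mult_1)
  also have "\<dots> = of_real (sqrt (pi / c)) * (of_real (k / sqrt (2 * pi)) * gauss_ft \<xi> (of_real c))"
    by (simp only: of_real_mult mult.assoc)
  also have "\<dots> = of_real (sqrt (pi / c) * exp (- \<xi>\<^sup>2 / (4 * c)))"
    by (simp only: char of_real_mult)
  finally show ?thesis .
qed

lemma tendsto_integral_exp_neg_sq_outside_interval:
  fixes c :: real
  assumes c: "0 < c"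
  shows "(\<lambda>n::nat. LINT u|lborel. indicator (- {- real n..real n}) u * exp (- c * u\<^sup>2)) \<longlonglongrightarrow> 0"
proof -
  have lim: "AE u in lborel. (\<lambda>n::nat. indicator (- {- real n..real n}) u * exp (- c * u\<^sup>2)) \<longlonglongrightarrow> 0"
  proof (intro AE_I2 tendsto_eventually eventually_sequentiallyI)
    fix u :: real and n :: nat
    assume "nat \<lceil>\<bar>u\<bar>\<rceil> \<le> n"
    then show "indicator (- {- real n..real n}) u * exp (- c * u\<^sup>2) = 0"
      by (auto simp: indicator_def)
  qed
  have "(\<lambda>n::nat. LINT u|lborel. indicator (- {- real n..real n}) u * exp (- c * u\<^sup>2))
      \<longlonglongrightarrow> integral\<^sup>L lborel (\<lambda>u::real. 0::real)"
  proof (rule integral_dominated_convergence[where w = "\<lambda>u. exp (- c * u\<^sup>2)" and f = "\<lambda>u. 0"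
        and s = "\<lambda>n u. indicator (- {- real n..real n}) u * exp (- c * u\<^sup>2)"])
    show "integrable lborel (\<lambda>u. exp (- c * u\<^sup>2))"
      by (rule integrable_exp_neg_sq[OF c])
  qed (use lim in \<open>auto intro: AE_I2 simp: indicator_def\<close>)
  then show ?thesis
    by simp
qed

lemma norm_gauss_ft_minus_truncation_le:
  assumes "0 < d" and "d \<le> Re a"
  shows "norm (gauss_ft \<xi> a - integral {- r..r} (\<lambda>u. exp (- a * (of_real u)\<^sup>2) * exp (- \<i> * of_real (\<xi> * u))))
      \<le> (LINT u|lborel. indicator (- {- r..r}) u * exp (- d * u\<^sup>2))"
proof -
  define f where "f = (\<lambda>u. exp (- a * (of_real u)\<^sup>2) * exp (- \<i> * of_real (\<xi> * u)))"
  have ft: "gauss_ft \<xi> a = (LINT u|lborel. f u)"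
    by (simp add: gauss_ft_def f_def)
  have int: "integrable lborel f"
    unfolding f_def using assms by (intro integrable_gauss_ft_integrand) simp
  then have "integral {- r..r} f = (LINT u|lborel. indicator {- r..r} u *\<^sub>R f u)"
    by (simp add: set_borel_integral_eq_integral(2)[symmetric] set_lebesgue_integral_def
        set_integrable_def integrable_mult_indicator)
  then have "gauss_ft \<xi> a - integral {- r..r} f = (LINT u|lborel. f u - indicator {- r..r} u *\<^sub>R f u)"
    using int by (simp add: ft integrable_mult_indicator Bochner_Integration.integral_diff)
  also have "\<dots> = (LINT u|lborel. indicator (- {- r..r}) u *\<^sub>R f u)"
    by (rule Bochner_Integration.integral_cong) (auto simp: indicator_def)
  also have "norm \<dots> \<le> (LINT u|lborel. indicator (- {- r..r}) u * exp (- d * u\<^sup>2))"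
  proof (rule Bochner_Integration.integral_norm_bound_integral)
    show "integrable lborel (\<lambda>u. indicator (- {- r..r}) u * exp (- d * u\<^sup>2))"
      using integrable_mult_indicator[OF _ integrable_exp_neg_sq[OF assms(1)], of "- {- r..r}"] by simp
    fix u
    have "norm (f u) \<le> exp (- d * u\<^sup>2)"
      unfolding f_def norm_gauss_ft_integrand using assms(2) by (simp add: mult_right_mono)
    then show "norm (indicator (- {- r..r}) u *\<^sub>R f u) \<le> indicator (- {- r..r}) u * exp (- d * u\<^sup>2)"
      by (simp add: indicator_def)
  qed (use int in \<open>auto intro: integrable_mult_indicator\<close>)
  finally show ?thesis
    unfolding f_def .
qed

lemma uniform_limit_gauss_ft_truncations:
  assumes "0 < d"
  shows "uniform_limit {a. d \<le> Re a}
    (\<lambda>n a. integral {- real n..real n} (\<lambda>u. exp (- a * (of_real u)\<^sup>2) * exp (- \<i> * of_real (\<xi> * u))))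
    (gauss_ft \<xi>) sequentially"
  unfolding uniform_limit_iff
proof (intro allI impI)
  fix e :: real
  assume "0 < e"
  with tendsto_integral_exp_neg_sq_outside_interval[OF assms] obtain N where N: "\<And>n. N \<le> n \<Longrightarrow>
      (LINT u|lborel. indicator (- {- real n..real n}) u * exp (- d * u\<^sup>2)) < e"
    unfolding LIMSEQ_iff by fastforce
  show "\<forall>\<^sub>F n in sequentially. \<forall>a\<in>{a. d \<le> Re a}. dist (integral {- real n..real n}
      (\<lambda>u. exp (- a * (of_real u)\<^sup>2) * exp (- \<i> * of_real (\<xi> * u)))) (gauss_ft \<xi> a) < e"
  proof (intro eventually_sequentiallyI[of N] ballI)
    fix n a
    assume "N \<le> n" and "a \<in> {a. d \<le> Re a}"
    then have "norm (gauss_ft \<xi> a - integral {- real n..real n}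
        (\<lambda>u. exp (- a * (of_real u)\<^sup>2) * exp (- \<i> * of_real (\<xi> * u)))) < e"
      by (intro le_less_trans[OF norm_gauss_ft_minus_truncation_le[OF assms] N]) auto
    then show "dist (integral {- real n..real n}
        (\<lambda>u. exp (- a * (of_real u)\<^sup>2) * exp (- \<i> * of_real (\<xi> * u)))) (gauss_ft \<xi> a) < e"
      by (simp only: dist_norm norm_minus_commute)
  qed
qed

lemma gauss_ft_holomorphic: "gauss_ft \<xi> holomorphic_on {a. 0 < Re a}"
proof (rule holomorphic_uniform_sequence[OF open_halfspace_Re_gt])
  fix n :: nat
  define f where "f = (\<lambda>a u. exp (- a * (of_real u)\<^sup>2) * exp (- \<i> * of_real (\<xi> * u)))"
  have "(\<lambda>a. integral (cbox (- real n) (real n)) (f a)) holomorphic_on {a. 0 < Re a}"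
  proof (rule leibniz_rule_holomorphic[where fx = "\<lambda>a u. - (of_real u)\<^sup>2 * f a u"])
    fix a and u :: real
    show "((\<lambda>a. f a u) has_field_derivative - (of_real u)\<^sup>2 * f a u) (at a within {a. 0 < Re a})"
      unfolding f_def by (auto intro!: derivative_eq_intros)
  next
    fix a
    show "f a integrable_on cbox (- real n) (real n)"
      unfolding f_def by (intro integrable_continuous continuous_intros)
  next
    show "continuous_on ({a. 0 < Re a} \<times> cbox (- real n) (real n)) (\<lambda>(a, u). - (of_real u)\<^sup>2 * f a u)"
      unfolding f_def by (auto simp: case_prod_beta intro!: continuous_intros)
  qed (rule convex_halfspace_Re_gt)
  then show "(\<lambda>a. integral {- real n..real n} (\<lambda>u. exp (- a * (of_real u)\<^sup>2) * exp (- \<i> * of_real (\<xi> * u))))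
      holomorphic_on {a. 0 < Re a}"
    by (simp add: f_def)
next
  fix a :: complex
  assume "a \<in> {a. 0 < Re a}"
  then have d: "0 < Re a / 2"
    by simp
  have "cball a (Re a / 2) \<subseteq> {b. Re a / 2 \<le> Re b}"
  proof
    fix b
    assume "b \<in> cball a (Re a / 2)"
    then have "\<bar>Re a - Re b\<bar> \<le> Re a / 2"
      using abs_Re_le_cmod[of "a - b"] by (simp add: dist_norm)
    then show "b \<in> {b. Re a / 2 \<le> Re b}"
      by (simp add: abs_if split: if_splits)
  qed
  then show "\<exists>d>0. cball a d \<subseteq> {a. 0 < Re a} \<and> uniform_limit (cball a d)
      (\<lambda>n a. integral {- real n..real n} (\<lambda>u. exp (- a * (of_real u)\<^sup>2) * exp (- \<i> * of_real (\<xi> * u))))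
      (gauss_ft \<xi>) sequentially"
    using d uniform_limit_on_subset[OF uniform_limit_gauss_ft_truncations[OF d]]
    by (intro exI[of _ "Re a / 2"]) force
qed

lemma one_islimpt_positive_reals: "1 islimpt (complex_of_real ` {0<..})"
  unfolding islimpt_sequential
proof (intro exI conjI allI)
  fix n :: nat
  have "0 < 1 + inverse (real (Suc n))"
    by (simp add: add_pos_pos)
  then show "complex_of_real (1 + inverse (Suc n)) \<in> complex_of_real ` {0<..} - {1}"
    by (auto simp del: of_real_add)
next
  have "(\<lambda>n. 1 + inverse (real (Suc n))) \<longlonglongrightarrow> 1"
    using tendsto_add[OF tendsto_const LIMSEQ_inverse_real_of_nat, of 1] by simp
  from tendsto_of_real[OF this, where 'a = complex, unfolded of_real_1]
  show "(\<lambda>n. complex_of_real (1 + inverse (Suc n))) \<longlonglongrightarrow> 1" .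
qed

lemma gauss_ft_eq:
  assumes "0 < Re a"
  shows "gauss_ft \<xi> a = csqrt (of_real pi / a) * exp (- (of_real \<xi>)\<^sup>2 / (4 * a))"
proof -
  define H where "H = {a::complex. 0 < Re a}"
  define G where "G = (\<lambda>a. csqrt (of_real pi / a) * exp (- (of_real \<xi>)\<^sup>2 / (4 * a)))"
  have Re_pos: "Re (of_real pi / b) > 0" if "b \<in> H" for b
  proof -
    have "0 < Re b * Re b + Im b * Im b"
      using that by (simp add: H_def add_pos_nonneg)
    then show ?thesis
      using that by (simp add: H_def Re_divide power2_eq_square)
  qed
  then have "G holomorphic_on H"
    unfolding G_def
  proof (intro holomorphic_intros)
    fix z
    assume z: "z \<in> H"
    then show "z \<noteq> 0" and "4 * z \<noteq> 0"
      by (auto simp: H_def)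
    show "of_real pi / z \<notin> \<real>\<^sub>\<le>\<^sub>0"
      using Re_pos[OF z] by (auto simp: complex_nonpos_Reals_iff)
  qed
  then have "(\<lambda>a. gauss_ft \<xi> a - G a) holomorphic_on H"
    using gauss_ft_holomorphic[of \<xi>] unfolding H_def by (intro holomorphic_intros)
  then have "gauss_ft \<xi> a - G a = 0"
  proof (rule analytic_continuation[where U = "of_real ` {0<..}" and \<xi> = 1])
    show "open H" and "connected H"
      by (simp_all add: H_def open_halfspace_Re_gt convex_connected convex_halfspace_Re_gt)
    show "of_real ` {0<..} \<subseteq> H" and "1 \<in> H" and "a \<in> H"
      using assms by (auto simp: H_def)
    show "1 islimpt complex_of_real ` {0<..}"
      by (rule one_islimpt_positive_reals)
    show "gauss_ft \<xi> z - G z = 0" if "z \<in> complex_of_real ` {0<..}" for z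
      using that gauss_ft_of_real by (auto simp: G_def csqrt_of_real_nonneg exp_of_real[symmetric])
  qed
  then show ?thesis
    by (simp add: G_def)
qed

section \<open>Gaussian integrals on Euclidean space\<close>

lemma sum_Basis_inner_sq: "(\<Sum>b\<in>Basis. (x \<bullet> b)\<^sup>2) = (norm (x::'a::euclidean_space))\<^sup>2"
  unfolding power2_norm_eq_inner by (subst euclidean_inner) (simp add: power2_eq_square)

lemma lborel_integral_prod_Basis:
  fixes h :: "'a::euclidean_space \<Rightarrow> real \<Rightarrow> 'b::{real_normed_field,banach,second_countable_topology}"
  assumes int: "\<And>b. b \<in> Basis \<Longrightarrow> integrable lborel (h b)"
  shows "integrable lborel (\<lambda>x::'a. \<Prod>b\<in>Basis. h b (x \<bullet> b))"
    and "(LINT x|lborel. (\<Prod>b\<in>Basis. h b (x \<bullet> b))) = (\<Prod>b\<in>Basis. (LINT u|lborel. h b u))"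
proof -
  interpret P: product_sigma_finite "\<lambda>_::'a. lborel::real measure"
    by (simp add: product_sigma_finite_def sigma_finite_lborel)
  define T where "T = (\<lambda>f. \<Sum>b\<in>(Basis::'a set). f b *\<^sub>R b)"
  have [measurable]: "h b \<in> borel_measurable borel" if "b \<in> Basis" for b
    using borel_measurable_integrable[OF int[OF that]] by simp
  have T: "T \<in> measurable (\<Pi>\<^sub>M b\<in>(Basis::'a set). lborel) borel"
    unfolding T_def by measurable
  have meas: "(\<lambda>x::'a. \<Prod>b\<in>Basis. h b (x \<bullet> b)) \<in> borel_measurable borel"
    by measurable
  have coords: "(\<Prod>b\<in>Basis. h b (T f \<bullet> b)) = (\<Prod>b\<in>Basis. h b (f b))" for f
    by (intro prod.cong refl) (simp add: T_def inner_sum_left inner_Basis if_distrib cong: if_cong)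
  have lborel: "(lborel::'a measure) = distr (\<Pi>\<^sub>M b\<in>Basis. lborel) borel T"
    unfolding T_def by (rule lborel_eq)
  show "integrable lborel (\<lambda>x::'a. \<Prod>b\<in>Basis. h b (x \<bullet> b))"
    unfolding lborel integrable_distr_eq[OF T meas] coords
    by (rule P.product_integrable_prod) (auto intro: int)
  show "(LINT x|lborel. (\<Prod>b\<in>Basis. h b (x \<bullet> b))) = (\<Prod>b\<in>Basis. (LINT u|lborel. h b u))"
    unfolding lborel integral_distr[OF T meas] coords
    by (rule P.product_integral_prod) (auto intro: int)
qed

definition gauss_transform :: "complex \<Rightarrow> 'a::euclidean_space \<Rightarrow> complex" where
  "gauss_transform a \<xi> = csqrt (of_real pi / a) ^ DIM('a) * exp (- of_real ((norm \<xi>)\<^sup>2) / (4 * a))"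

lemma gauss_ft_euclidean:
  fixes \<xi> :: "'a::euclidean_space"
  assumes "0 < Re a"
  shows "integrable lborel (\<lambda>x::'a. exp (- a * of_real ((norm x)\<^sup>2)) * exp (- \<i> * of_real (\<xi> \<bullet> x)))"
    and "(LINT x|lborel. exp (- a * of_real ((norm x)\<^sup>2)) * exp (- \<i> * of_real (\<xi> \<bullet> x)))
      = gauss_transform a \<xi>"
proof -
  define h where "h b u = exp (- a * (of_real u)\<^sup>2) * exp (- \<i> * of_real ((\<xi> \<bullet> b) * u))"
    for b :: 'a and u :: real
  have h: "integrable lborel (h b)" for b
    unfolding h_def using assms by (rule integrable_gauss_ft_integrand)
  have "exp (- a * of_real ((norm x)\<^sup>2)) * exp (- \<i> * of_real (\<xi> \<bullet> x)) = (\<Prod>b\<in>Basis. h b (x \<bullet> b))"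
    for x :: 'a
    by (simp add: h_def prod.distrib exp_sum sum_distrib_left euclidean_inner[of \<xi> x] mult.commute
        flip: sum_Basis_inner_sq[of x] sum_negf)
  then have factor: "(\<lambda>x::'a. exp (- a * of_real ((norm x)\<^sup>2)) * exp (- \<i> * of_real (\<xi> \<bullet> x)))
      = (\<lambda>x. \<Prod>b\<in>Basis. h b (x \<bullet> b))"
    by simp
  show "integrable lborel (\<lambda>x::'a. exp (- a * of_real ((norm x)\<^sup>2)) * exp (- \<i> * of_real (\<xi> \<bullet> x)))"
    unfolding factor using h by (rule lborel_integral_prod_Basis)
  have "(LINT x|lborel. (\<Prod>b\<in>Basis. h b (x \<bullet> b))) = (\<Prod>b\<in>(Basis::'a set). gauss_ft (\<xi> \<bullet> b) a)"
    using lborel_integral_prod_Basis(2)[OF h] by (simp add: h_def gauss_ft_def)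
  also have "\<dots> = gauss_transform a \<xi>"
    using assms by (simp add: gauss_ft_eq gauss_transform_def prod.distrib exp_sum sum_divide_distrib
        flip: sum_Basis_inner_sq[of \<xi>] sum_negf)
  finally show "(LINT x|lborel. exp (- a * of_real ((norm x)\<^sup>2)) * exp (- \<i> * of_real (\<xi> \<bullet> x)))
      = gauss_transform a \<xi>"
    unfolding factor .
qed

section \<open>The Brownian-time Brownian motion kernel\<close>

lemma sqrt_power_eq_powr: "0 < y \<Longrightarrow> sqrt y ^ n = y powr (real n / 2)"
  by (simp add: powr_half_sqrt[symmetric] powr_realpow[symmetric] powr_powr)

definition heat_kernel :: "real \<Rightarrow> 'a::euclidean_space \<Rightarrow> real" where
  "heat_kernel s x = exp (- (norm x)\<^sup>2 / (2 * s)) / (2 * pi * s) powr (real DIM('a) / 2)"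

lemma heat_kernel_nonneg: "0 \<le> heat_kernel s x"
  by (simp add: heat_kernel_def)

lemma heat_kernel_ft:
  fixes \<xi> :: "'a::euclidean_space"
  assumes s: "0 < s"
  shows "integrable lborel (\<lambda>x::'a. of_real (heat_kernel s x) * exp (- \<i> * of_real (\<xi> \<bullet> x)))"
    and "(LINT x|lborel. of_real (heat_kernel s x) * exp (- \<i> * of_real (\<xi> \<bullet> x)))
      = of_real (exp (- s * (norm \<xi>)\<^sup>2 / 2))"
proof -
  define a where "a = complex_of_real (1 / (2 * s))"
  define c where "c = 1 / (2 * pi * s) powr (real DIM('a) / 2)"
  have a: "0 < Re a"
    using s by (simp add: a_def)
  have heat: "of_real (heat_kernel s x) * exp (- \<i> * of_real (\<xi> \<bullet> x))
      = of_real c * (exp (- a * of_real ((norm x)\<^sup>2)) * exp (- \<i> * of_real (\<xi> \<bullet> x)))" for x :: 'a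
    by (simp add: heat_kernel_def a_def c_def exp_of_real[symmetric])
  show "integrable lborel (\<lambda>x::'a. of_real (heat_kernel s x) * exp (- \<i> * of_real (\<xi> \<bullet> x)))"
    unfolding heat by (intro integrable_mult_right gauss_ft_euclidean(1)[OF a])
  have "gauss_transform a \<xi> = of_real (sqrt (2 * pi * s) ^ DIM('a) * exp (- s * (norm \<xi>)\<^sup>2 / 2))"
    using s by (simp add: gauss_transform_def a_def csqrt_of_real_nonneg exp_of_real[symmetric] field_simps)
  moreover have "c * sqrt (2 * pi * s) ^ DIM('a) = 1"
    using s by (simp add: c_def sqrt_power_eq_powr)
  ultimately show "(LINT x|lborel. of_real (heat_kernel s x) * exp (- \<i> * of_real (\<xi> \<bullet> x)))
      = of_real (exp (- s * (norm \<xi>)\<^sup>2 / 2))"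
    unfolding heat integral_mult_right_zero gauss_ft_euclidean(2)[OF a]
    by (simp add: mult.assoc flip: of_real_mult)
qed

lemma integral_heat_kernel:
  assumes "0 < s"
  shows "(LINT x|lborel. heat_kernel s (x::'a::euclidean_space)) = 1"
proof -
  have "of_real (LINT x|lborel. heat_kernel s (x::'a)) = (1::complex)"
    using heat_kernel_ft(2)[OF assms, of 0] by simp
  then show ?thesis
    by (simp only: of_real_eq_1_iff)
qed

lemma fourier_heat_kernel_mixture:
  fixes w :: "real \<Rightarrow> real" and \<xi> :: "'a::euclidean_space"
  assumes w: "integrable lborel w"
  shows "fourier (\<lambda>x::'a. of_real (LINT s:{0<..}|lborel. heat_kernel s x * w s)) \<xi>
    = of_real ((2 * pi) powr (- real DIM('a) / 2) * (LINT s:{0<..}|lborel. w s * exp (- s * (norm \<xi>)\<^sup>2 / 2)))"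
proof -
  define e where "e x = exp (- \<i> * of_real (\<xi> \<bullet> x))" for x :: 'a
  define F where "F s x = of_real (indicator {0<..} s * (heat_kernel s x * w s)) * e x" for s x
  have [measurable]: "w \<in> borel_measurable lborel"
    using w by (rule borel_measurable_integrable)
  have F_pos: "F s = (\<lambda>x. of_real (w s) * (of_real (heat_kernel s x) * e x))" if "0 < s" for s
    using that by (simp add: F_def fun_eq_iff)
  have F_nonpos: "F s = (\<lambda>x. 0)" if "\<not> 0 < s" for s
    using that by (simp add: F_def fun_eq_iff)
  have inner: "(LINT x|lborel. F s x) = of_real (indicator {0<..} s * (w s * exp (- s * (norm \<xi>)\<^sup>2 / 2)))" for s
  proof (cases "0 < s")
    case True
    then show ?thesis
      unfolding F_pos[OF True] integral_mult_right_zero e_def heat_kernel_ft(2)[OF True] by simp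
  qed (simp add: F_nonpos)
  have intF: "integrable (lborel \<Otimes>\<^sub>M lborel) (\<lambda>(s, x). F s x)"
  proof (rule lborel_pair.Fubini_integrable)
    show "(\<lambda>(s, x). F s x) \<in> borel_measurable (lborel \<Otimes>\<^sub>M lborel)"
      unfolding F_def e_def heat_kernel_def by measurable
    have "(LINT x|lborel. norm (F s x)) = indicator {0<..} s * norm (w s)" for s
      by (cases "0 < s") (simp_all add: F_pos F_nonpos e_def norm_mult heat_kernel_nonneg integral_heat_kernel)
    then show "integrable lborel (\<lambda>s. LINT x|lborel. norm (case (s, x) of (s, x) \<Rightarrow> F s x))"
      using integrable_mult_indicator[OF _ integrable_norm[OF w], of "{0<..}"] by simp
    have "integrable lborel (F s)" for s
      using heat_kernel_ft(1)[of s \<xi>, THEN integrable_mult_right[of "of_real (w s)"]]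
      by (cases "0 < s") (simp_all add: F_pos F_nonpos e_def)
    then show "AE s in lborel. integrable lborel (\<lambda>x. case (s, x) of (s, x) \<Rightarrow> F s x)"
      by simp
  qed
  have "of_real (LINT s:{0<..}|lborel. heat_kernel s x * w s) * e x = (LINT s|lborel. F s x)" for x
  proof -
    have "of_real (LINT s:{0<..}|lborel. heat_kernel s x * w s)
        = (LINT s|lborel. of_real (indicator {0<..} s * (heat_kernel s x * w s)) :: complex)"
      by (simp only: set_lebesgue_integral_def real_scaleR_def integral_complex_of_real)
    then show ?thesis
      by (simp only: F_def integral_mult_left_zero)
  qed
  then have "fourier (\<lambda>x::'a. of_real (LINT s:{0<..}|lborel. heat_kernel s x * w s)) \<xi>
      = of_real ((2 * pi) powr (- real DIM('a) / 2)) * (LINT x|lborel. (LINT s|lborel. F s x))"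
    by (simp add: fourier_def e_def)
  also have "(LINT x|lborel. (LINT s|lborel. F s x)) = (LINT s|lborel. (LINT x|lborel. F s x))"
    by (rule lborel_pair.Fubini_integral[OF intF])
  finally show ?thesis
    unfolding inner integral_complex_of_real by (simp add: set_lebesgue_integral_def)
qed

lemma laplace_transform_half_normal:
  fixes t A :: real
  assumes t: "0 < t"
  shows "(LINT s:{0<..}|lborel. normal_density 0 (sqrt t) s * exp (- s * A))
    = exp (t * A\<^sup>2 / 2) / sqrt pi * (LINT \<tau>:{sqrt (2 * t) * A / 2..}|lborel. exp (- \<tau>\<^sup>2))"
proof -
  define k where "k = sqrt (2 * t)"
  define L where "L = k * A / 2"
  have k: "0 < k" "k * k = 2 * t"
    using t by (auto simp: k_def)
  define f where "f s = indicator {0<..} s * (exp (- s\<^sup>2 / (2 * t)) / sqrt (2 * pi * t) * exp (- s * A))" for s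
  have "(LINT s|lborel. f s) = k * (LINT \<tau>|lborel. f (- t * A + k * \<tau>))"
    using lborel_integral_real_affine[of k f "- t * A"] k by simp
  also have "(LINT \<tau>|lborel. f (- t * A + k * \<tau>))
      = (LINT \<tau>|lborel. exp (t * A\<^sup>2 / 2) / sqrt (2 * pi * t) * (indicator {L..} \<tau> * exp (- \<tau>\<^sup>2)))"
  proof (rule integral_cong_AE)
    show "AE \<tau> in lborel. f (- t * A + k * \<tau>)
        = exp (t * A\<^sup>2 / 2) / sqrt (2 * pi * t) * (indicator {L..} \<tau> * exp (- \<tau>\<^sup>2))"
      using AE_lborel_singleton[of L]
    proof eventually_elim
      fix \<tau>
      assume "\<tau> \<noteq> L"
      have "0 < - t * A + k * \<tau> \<longleftrightarrow> k * L < k * \<tau>"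
        using k by (simp add: L_def algebra_simps)
      then have positive: "0 < - t * A + k * \<tau> \<longleftrightarrow> L \<le> \<tau>"
        using k \<open>\<tau> \<noteq> L\<close> by auto
      have "(- t * A + k * \<tau>)\<^sup>2 = t\<^sup>2 * A\<^sup>2 - 2 * t * A * k * \<tau> + (k * k) * \<tau>\<^sup>2"
        by (simp add: power2_eq_square algebra_simps)
      then have "- (- t * A + k * \<tau>)\<^sup>2 / (2 * t) + - (- t * A + k * \<tau>) * A = t * A\<^sup>2 / 2 + - \<tau>\<^sup>2"
        using t k by (simp add: field_simps power2_eq_square)
      then have "exp (- (- t * A + k * \<tau>)\<^sup>2 / (2 * t)) * exp (- (- t * A + k * \<tau>) * A)
          = exp (t * A\<^sup>2 / 2) * exp (- \<tau>\<^sup>2)"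
        by (simp only: mult_exp_exp)
      then show "f (- t * A + k * \<tau>)
          = exp (t * A\<^sup>2 / 2) / sqrt (2 * pi * t) * (indicator {L..} \<tau> * exp (- \<tau>\<^sup>2))"
        using positive by (simp add: f_def indicator_def)
    qed
  qed (simp_all add: f_def)
  finally have "(LINT s|lborel. f s)
      = k / sqrt (2 * pi * t) * exp (t * A\<^sup>2 / 2) * (LINT \<tau>:{L..}|lborel. exp (- \<tau>\<^sup>2))"
    by (simp add: set_lebesgue_integral_def)
  then show ?thesis
    using t by (simp add: f_def L_def k_def normal_density_centred set_lebesgue_integral_def mult_ac
        real_sqrt_mult)
qed

lemma fourier_btbm_kernel:
  fixes \<xi> :: "'a::euclidean_space"
  assumes t: "0 < t"
  shows "fourier (\<lambda>x. of_real (btbm_kernel t x)) \<xi> =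
    of_real ((2 * pi) powr (- real DIM('a) / 2) * exp (t / 8 * (norm \<xi>) ^ 4)
      * (2 / sqrt pi * (LINT \<tau>:{sqrt (2 * t) * (norm \<xi>)\<^sup>2 / 4..}|lborel. exp (- \<tau>\<^sup>2))))"
proof -
  define \<rho> where "\<rho> = normal_density 0 (sqrt t)"
  define A where "A = (norm \<xi>)\<^sup>2 / 2"
  have "btbm_kernel t x = (LINT s:{0<..}|lborel. heat_kernel s x * (2 * \<rho> s))" for x :: 'a
    using t by (simp add: btbm_kernel_def heat_kernel_def \<rho>_def normal_density_centred set_lebesgue_integral_def
        mult_ac flip: integral_mult_right_zero)
  then have "fourier (\<lambda>x. of_real (btbm_kernel t x)) \<xi>
      = of_real ((2 * pi) powr (- real DIM('a) / 2) * (LINT s:{0<..}|lborel. 2 * \<rho> s * exp (- s * A)))"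
    using fourier_heat_kernel_mixture[of "\<lambda>s. 2 * \<rho> s" \<xi>] t by (simp add: \<rho>_def A_def)
  also have "(LINT s:{0<..}|lborel. 2 * \<rho> s * exp (- s * A))
      = 2 * (exp (t * A\<^sup>2 / 2) / sqrt pi * (LINT \<tau>:{sqrt (2 * t) * A / 2..}|lborel. exp (- \<tau>\<^sup>2)))"
    unfolding \<rho>_def laplace_transform_half_normal[OF t, symmetric]
    by (simp add: set_lebesgue_integral_def mult_ac flip: integral_mult_right_zero)
  also have "t * A\<^sup>2 / 2 = t / 8 * (norm \<xi>) ^ 4"
    by (simp add: A_def power2_eq_square power4_eq_xxxx)
  also have "sqrt (2 * t) * A / 2 = sqrt (2 * t) * (norm \<xi>)\<^sup>2 / 4"
    by (simp add: A_def)
  finally show ?thesis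
    by (simp add: mult_ac)
qed

section \<open>The L-KS kernel\<close>

lemma lborel_pair_integrable_mult:
  fixes f :: "'a::euclidean_space \<Rightarrow> complex" and g :: "'b::euclidean_space \<Rightarrow> complex"
  assumes f: "integrable lborel f" and g: "integrable lborel g"
    and h: "(\<lambda>(x, y). h x y) \<in> borel_measurable (lborel \<Otimes>\<^sub>M lborel)" and norm_h: "\<And>x y. norm (h x y) = 1"
  shows "integrable (lborel \<Otimes>\<^sub>M lborel) (\<lambda>(x, y). f x * g y * h x y)"
proof (rule lborel_pair.Fubini_integrable)
  have [measurable]: "f \<in> borel_measurable lborel" "g \<in> borel_measurable lborel"
    using f g by (simp_all add: borel_measurable_integrable)
  show "(\<lambda>(x, y). f x * g y * h x y) \<in> borel_measurable (lborel \<Otimes>\<^sub>M lborel)"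
    using h by measurable
  show "integrable lborel (\<lambda>x. LINT y|lborel. norm (case (x, y) of (x, y) \<Rightarrow> f x * g y * h x y))"
    using integrable_mult_left[OF integrable_norm[OF f], of "LINT y|lborel. norm (g y)"]
    by (simp add: norm_mult norm_h)
  have "integrable lborel (\<lambda>y. f x * g y * h x y)" for x
    using h by (intro Bochner_Integration.integrable_bound[OF integrable_mult_right[OF g, of "f x"]])
      (auto simp: norm_mult norm_h)
  then show "AE x in lborel. integrable lborel (\<lambda>y. case (x, y) of (x, y) \<Rightarrow> f x * g y * h x y)"
    by simp
qed

lemma fourier_multiplication_formula:
  fixes g \<psi> :: "'a::euclidean_space \<Rightarrow> complex"
  assumes g: "integrable lborel g" and \<psi>: "integrable lborel \<psi>"
  shows "(LINT x|lborel. g x * fourier \<psi> x) = (LINT \<xi>|lborel. fourier g \<xi> * \<psi> \<xi>)"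
proof -
  define c where "c = complex_of_real ((2 * pi) powr (- real DIM('a) / 2))"
  define K where "K x \<xi> = g x * (\<psi> \<xi> * exp (- \<i> * of_real (x \<bullet> \<xi>)))" for x \<xi> :: 'a
  have int: "integrable (lborel \<Otimes>\<^sub>M lborel) (\<lambda>(x, \<xi>). K x \<xi>)"
    using lborel_pair_integrable_mult[OF g \<psi>, of "\<lambda>x \<xi>. exp (- \<i> * of_real (x \<bullet> \<xi>))"]
    by (simp add: K_def mult.assoc)
  have "g x * fourier \<psi> x = c * (LINT \<xi>|lborel. K x \<xi>)" for x
    unfolding fourier_def c_def K_def integral_mult_right_zero by (simp only: mult.left_commute)
  then have "(LINT x|lborel. g x * fourier \<psi> x) = c * (LINT x|lborel. (LINT \<xi>|lborel. K x \<xi>))"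
    by simp
  also have "(LINT x|lborel. (LINT \<xi>|lborel. K x \<xi>)) = (LINT \<xi>|lborel. (LINT x|lborel. K x \<xi>))"
    using lborel_pair.Fubini_integral[OF int] by simp
  also have "(LINT \<xi>|lborel. (LINT x|lborel. K x \<xi>))
      = (LINT \<xi>|lborel. (LINT x|lborel. g x * exp (- \<i> * of_real (\<xi> \<bullet> x))) * \<psi> \<xi>)"
    unfolding K_def integral_mult_left_zero[symmetric] by (simp add: inner_commute mult_ac)
  also have "c * (LINT \<xi>|lborel. (LINT x|lborel. g x * exp (- \<i> * of_real (\<xi> \<bullet> x))) * \<psi> \<xi>)
      = (LINT \<xi>|lborel. fourier g \<xi> * \<psi> \<xi>)"
    by (simp add: fourier_def c_def mult.assoc)
  finally show ?thesis .
qed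

lemma fourier_pairing_gaussian:
  fixes \<psi> :: "'a::euclidean_space \<Rightarrow> complex"
  assumes \<psi>: "integrable lborel \<psi>" and a: "0 < Re a"
  shows "(LINT x|lborel. exp (- a * of_real ((norm x)\<^sup>2)) * fourier \<psi> x)
    = of_real ((2 * pi) powr (- real DIM('a) / 2)) * (LINT \<xi>|lborel. gauss_transform a \<xi> * \<psi> \<xi>)"
proof -
  have "integrable lborel (\<lambda>x::'a. exp (- a * of_real ((norm x)\<^sup>2)))"
    using gauss_ft_euclidean(1)[OF a, of 0] by simp
  moreover have "fourier (\<lambda>x::'a. exp (- a * of_real ((norm x)\<^sup>2))) \<xi>
      = of_real ((2 * pi) powr (- real DIM('a) / 2)) * gauss_transform a \<xi>" for \<xi>
    by (simp only: fourier_def gauss_ft_euclidean(2)[OF a])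
  ultimately show ?thesis
    by (simp add: fourier_multiplication_formula[OF _ \<psi>] mult.assoc)
qed

lemma isCont_gauss_transform:
  assumes "0 \<le> Re a" and "a \<noteq> 0"
  shows "isCont (\<lambda>b. gauss_transform b \<xi>) a"
proof -
  have "0 \<le> Re (of_real pi / a)" and "of_real pi / a \<noteq> 0"
    using assms by (simp_all add: Re_divide)
  then have "of_real pi / a \<notin> \<real>\<^sub>\<le>\<^sub>0"
    by (auto simp: complex_nonpos_Reals_iff complex_eq_iff)
  then show ?thesis
    unfolding gauss_transform_def using assms(2)
    by (intro continuous_intros isCont_o2[OF _ continuous_at_csqrt]) auto
qed

lemma norm_gauss_transform_le:
  assumes "0 \<le> Re b" and "0 < r" and "r \<le> norm b"
  shows "norm (gauss_transform b (\<xi>::'a::euclidean_space)) \<le> sqrt (pi / r) ^ DIM('a)"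
proof -
  have sqrt: "norm (csqrt (of_real pi / b)) \<le> sqrt (pi / r)"
    using assms by (simp add: norm_divide frac_le)
  have "0 \<le> Re (of_real ((norm \<xi>)\<^sup>2) / (4 * b))"
    using assms(1) by (simp add: Re_divide)
  then have exp: "norm (exp (- of_real ((norm \<xi>)\<^sup>2) / (4 * b))) \<le> 1"
    by simp
  have "norm (gauss_transform b \<xi>) \<le> sqrt (pi / r) ^ DIM('a) * 1"
    unfolding gauss_transform_def norm_mult norm_power
    using assms(2) by (intro mult_mono power_mono sqrt exp) auto
  then show ?thesis
    by simp
qed

lemma fourier_pairing_gaussian_Re_nonneg:
  fixes \<psi> :: "'a::euclidean_space \<Rightarrow> complex"
  assumes \<psi>: "integrable lborel \<psi>" and F\<psi>: "integrable lborel (fourier \<psi>)"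
    and a: "0 \<le> Re a" "a \<noteq> 0"
  shows "(LINT x|lborel. exp (- a * of_real ((norm x)\<^sup>2)) * fourier \<psi> x)
    = of_real ((2 * pi) powr (- real DIM('a) / 2)) * (LINT \<xi>|lborel. gauss_transform a \<xi> * \<psi> \<xi>)"
proof -
  define b where "b n = a + of_real (inverse (real (Suc n)))" for n
  have [measurable]: "\<psi> \<in> borel_measurable lborel" "fourier \<psi> \<in> borel_measurable lborel"
    using \<psi> F\<psi> by (simp_all add: borel_measurable_integrable)
  have Re_b: "0 < Re (b n)" for n
    using a by (simp add: b_def add_nonneg_pos)
  have b: "b \<longlonglongrightarrow> a"
    unfolding b_def using tendsto_add[OF tendsto_const tendsto_of_real[OF LIMSEQ_inverse_real_of_nat], of a]
    by simp
  have norm_b: "norm a \<le> norm (b n)" for n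
    using a by (simp add: b_def cmod_def power_mono)
  have "(\<lambda>n. LINT x|lborel. exp (- b n * of_real ((norm x)\<^sup>2)) * fourier \<psi> x)
      \<longlonglongrightarrow> (LINT x|lborel. exp (- a * of_real ((norm x)\<^sup>2)) * fourier \<psi> x)"
  proof (rule integral_dominated_convergence[where w = "\<lambda>x. norm (fourier \<psi> x)"])
    show "AE x in lborel. (\<lambda>n. exp (- b n * of_real ((norm x)\<^sup>2)) * fourier \<psi> x)
        \<longlonglongrightarrow> exp (- a * of_real ((norm x)\<^sup>2)) * fourier \<psi> x"
      using b by (intro AE_I2 tendsto_intros)
    show "AE x in lborel. norm (exp (- b n * of_real ((norm x)\<^sup>2)) * fourier \<psi> x) \<le> norm (fourier \<psi> x)" for n
      using Re_b[of n] by (intro AE_I2) (simp add: norm_mult mult_left_le_one_le)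
  qed (use F\<psi> in auto)
  moreover have "(\<lambda>n. LINT \<xi>|lborel. gauss_transform (b n) \<xi> * \<psi> \<xi>)
      \<longlonglongrightarrow> (LINT \<xi>|lborel. gauss_transform a \<xi> * \<psi> \<xi>)"
  proof (rule integral_dominated_convergence[where w = "\<lambda>\<xi>. sqrt (pi / norm a) ^ DIM('a) * norm (\<psi> \<xi>)"])
    show "AE \<xi> in lborel. (\<lambda>n. gauss_transform (b n) \<xi> * \<psi> \<xi>) \<longlonglongrightarrow> gauss_transform a \<xi> * \<psi> \<xi>"
      using isCont_tendsto_compose[OF isCont_gauss_transform[OF a] b] by (intro AE_I2 tendsto_intros)
    show "AE \<xi> in lborel. norm (gauss_transform (b n) \<xi> * \<psi> \<xi>) \<le> sqrt (pi / norm a) ^ DIM('a) * norm (\<psi> \<xi>)" for n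
      using norm_gauss_transform_le[OF less_imp_le[OF Re_b] _ norm_b, where 'a = 'a] a(2)
      by (intro AE_I2) (simp add: norm_mult mult_right_mono)
  qed (use \<psi> in \<open>auto simp: gauss_transform_def\<close>)
  ultimately show ?thesis
    using fourier_pairing_gaussian[OF \<psi> Re_b] by (auto intro: LIMSEQ_unique tendsto_mult_left)
qed

lemma csqrt_power_eq_powr:
  assumes "z \<noteq> 0"
  shows "csqrt z ^ n = z powr of_real (real n / 2)"
proof -
  have "csqrt z ^ n = exp (Ln z / 2) ^ n"
    using assms by (simp add: csqrt_exp_Ln)
  also have "\<dots> = exp (of_nat n * (Ln z / 2))"
    by (rule exp_of_nat_mult[symmetric])
  finally show ?thesis
    using assms by (simp add: powr_def mult_ac)
qed

lemma lks_integrand_pairing: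
  fixes \<psi> :: "'a::euclidean_space \<Rightarrow> complex"
  assumes \<psi>: "integrable lborel \<psi>" and F\<psi>: "integrable lborel (fourier \<psi>)"
    and \<epsilon>: "0 < \<epsilon>" and t: "0 < t" and s: "s \<noteq> 0"
  shows "(LINT x|lborel. lks_integrand \<epsilon> \<theta> t s x * fourier \<psi> x)
    = of_real ((2 * pi) powr (- real DIM('a) / 2)) * (LINT \<xi>|lborel.
        of_real (normal_density 0 (sqrt (\<epsilon> * t)) s) * exp (\<i> * of_real ((\<theta> - (norm \<xi>)\<^sup>2 / 2) * s)) * \<psi> \<xi>)"
proof -
  define a where "a = 1 / (2 * \<i> * of_real s)"
  define P where "P = (2 * of_real pi * \<i> * of_real s) powr of_real (real DIM('a) / 2)"
  define K where "K = exp (\<i> * of_real (\<theta> * s)) / P * of_real (normal_density 0 (sqrt (\<epsilon> * t)) s)"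
  have "a = - \<i> * of_real (1 / (2 * s))"
    using s by (simp add: a_def field_simps)
  then have a: "0 \<le> Re a" "a \<noteq> 0"
    using s by simp_all
  have "P \<noteq> 0"
    using s by (simp add: P_def)
  have integrand: "lks_integrand \<epsilon> \<theta> t s x = K * exp (- a * of_real ((norm x)\<^sup>2))" for x :: 'a
    using \<epsilon> t by (simp add: lks_integrand_def K_def P_def a_def normal_density_centred mult_ac)
  have "gauss_transform a \<xi> = P * exp (- \<i> * of_real (s * (norm \<xi>)\<^sup>2 / 2))" for \<xi> :: 'a
  proof -
    have "csqrt (of_real pi / a) ^ DIM('a) = P"
      using s by (simp add: a_def P_def csqrt_power_eq_powr mult_ac)
    moreover have "- of_real ((norm \<xi>)\<^sup>2) / (4 * a) = - \<i> * of_real (s * (norm \<xi>)\<^sup>2 / 2)"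
      using s by (simp add: a_def field_simps)
    ultimately show ?thesis
      unfolding gauss_transform_def by (simp only:)
  qed
  then have transform: "K * gauss_transform a \<xi> = of_real (normal_density 0 (sqrt (\<epsilon> * t)) s)
      * exp (\<i> * of_real ((\<theta> - (norm \<xi>)\<^sup>2 / 2) * s))" for \<xi> :: 'a
    using \<open>P \<noteq> 0\<close> by (simp add: K_def mult_exp_exp algebra_simps)
  have "(LINT x|lborel. lks_integrand \<epsilon> \<theta> t s x * fourier \<psi> x)
      = K * (LINT x|lborel. exp (- a * of_real ((norm x)\<^sup>2)) * fourier \<psi> x)"
    by (simp add: integrand mult.assoc)
  also have "\<dots> = of_real ((2 * pi) powr (- real DIM('a) / 2)) * (LINT \<xi>|lborel. K * gauss_transform a \<xi> * \<psi> \<xi>)"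
    unfolding fourier_pairing_gaussian_Re_nonneg[OF \<psi> F\<psi> a] by (simp add: mult.assoc mult.left_commute)
  finally show ?thesis
    by (simp only: transform)
qed

lemma char_normal_density:
  assumes "0 < \<sigma>"
  shows "(LINT s|lborel. of_real (normal_density 0 \<sigma> s) * exp (\<i> * of_real (\<omega> * s)))
    = of_real (exp (- \<sigma>\<^sup>2 * \<omega>\<^sup>2 / 2))"
proof -
  define c where "c = 1 / (2 * \<sigma>\<^sup>2)"
  have c: "0 < c"
    using assms by (simp add: c_def)
  have "of_real (normal_density 0 \<sigma> s) * exp (\<i> * of_real (\<omega> * s))
      = of_real (1 / sqrt (2 * pi * \<sigma>\<^sup>2)) * (exp (- of_real c * (of_real s)\<^sup>2) * exp (- \<i> * of_real (- \<omega> * s)))"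
    for s
    by (simp add: normal_density_def c_def exp_of_real[symmetric] mult_ac)
  then have "(LINT s|lborel. of_real (normal_density 0 \<sigma> s) * exp (\<i> * of_real (\<omega> * s)))
      = of_real (1 / sqrt (2 * pi * \<sigma>\<^sup>2)) * gauss_ft (- \<omega>) (of_real c)"
    by (simp add: gauss_ft_def)
  also have "\<dots> = of_real (exp (- \<sigma>\<^sup>2 * \<omega>\<^sup>2 / 2))"
    using assms unfolding gauss_ft_of_real[OF c]
    by (simp add: c_def real_sqrt_divide real_sqrt_mult field_simps flip: of_real_mult)
  finally show ?thesis .
qed

lemma set_integral_nonpos_add_nonneg:
  fixes f :: "real \<Rightarrow> 'b::{banach,second_countable_topology}"
  assumes "integrable lborel f"
  shows "(LINT s:{..0}|lborel. f s) + (LINT s:{0..}|lborel. f s) = (LINT s|lborel. f s)"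
proof -
  have "(LINT s:{..0}|lborel. f s) + (LINT s:{0..}|lborel. f s)
      = (LINT s|lborel. indicator {..0} s *\<^sub>R f s + indicator {0..} s *\<^sub>R f s)"
    unfolding set_lebesgue_integral_def using assms
    by (intro Bochner_Integration.integral_add[symmetric] integrable_mult_indicator) auto
  also have "\<dots> = (LINT s|lborel. f s)"
    by (rule integral_discrete_difference[where X = "{0}"]) (auto simp: indicator_def)
  finally show ?thesis .
qed

lemma lks_pairing_fourier:
  fixes \<psi> :: "'a::euclidean_space \<Rightarrow> complex"
  assumes t: "0 < t" and \<epsilon>: "0 < \<epsilon>"
    and \<psi>: "integrable lborel \<psi>" and F\<psi>: "integrable lborel (fourier \<psi>)"
  shows "lks_pairing \<epsilon> \<theta> t (fourier \<psi>) = (LINT \<xi>|lborel. of_real ((2 * pi) powr (- real DIM('a) / 2)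
      * exp (- (\<epsilon> * t / 8) * (- 2 * \<theta> + (norm \<xi>)\<^sup>2)\<^sup>2)) * \<psi> \<xi>)"
proof -
  define c where "c = complex_of_real ((2 * pi) powr (- real DIM('a) / 2))"
  define \<rho> where "\<rho> = normal_density 0 (sqrt (\<epsilon> * t))"
  define k where "k s \<xi> = of_real (\<rho> s) * \<psi> \<xi> * exp (\<i> * of_real ((\<theta> - (norm \<xi>)\<^sup>2 / 2) * s))"
    for s and \<xi> :: 'a
  define I where "I = (\<lambda>s. LINT x|lborel. lks_integrand \<epsilon> \<theta> t s x * fourier \<psi> x)"
  define J where "J s = c * (LINT \<xi>|lborel. k s \<xi>)" for s
  have "0 < \<epsilon> * t"
    using \<epsilon> t by simp
  have k: "integrable (lborel \<Otimes>\<^sub>M lborel) (\<lambda>(s, \<xi>). k s \<xi>)"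
    unfolding k_def \<rho>_def using \<open>0 < \<epsilon> * t\<close>
    by (intro lborel_pair_integrable_mult \<psi>) auto
  have J: "integrable lborel J"
    unfolding J_def using lborel_pair.integrable_fst'[OF k] by simp
  \<comment> \<open>At \<open>s = 0\<close> the L-KS integrand is a junk value (division by zero); one point is negligible.\<close>
  have "I s = J s" if "s \<noteq> 0" for s
    using lks_integrand_pairing[OF \<psi> F\<psi> \<epsilon> t that]
    by (simp add: I_def J_def k_def \<rho>_def c_def mult_ac)
  then have "set_lebesgue_integral lborel A I = set_lebesgue_integral lborel A J" for A
    unfolding set_lebesgue_integral_def by (intro integral_discrete_difference[where X = "{0}"]) auto
  moreover have "lks_pairing \<epsilon> \<theta> t (fourier \<psi>)
      = set_lebesgue_integral lborel {..0} I + set_lebesgue_integral lborel {0..} I"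
    by (simp add: lks_pairing_def I_def)
  ultimately have "lks_pairing \<epsilon> \<theta> t (fourier \<psi>) = (LINT s|lborel. J s)"
    using set_integral_nonpos_add_nonneg[OF J] by simp
  also have "\<dots> = c * (LINT \<xi>|lborel. (LINT s|lborel. k s \<xi>))"
    using lborel_pair.Fubini_integral[OF k] by (simp add: J_def)
  also have "\<dots> = (LINT \<xi>|lborel. of_real ((2 * pi) powr (- real DIM('a) / 2)
      * exp (- (\<epsilon> * t / 8) * (- 2 * \<theta> + (norm \<xi>)\<^sup>2)\<^sup>2)) * \<psi> \<xi>)"
  proof -
    have exponent: "- (\<epsilon> * t) * (\<theta> - (norm \<xi>)\<^sup>2 / 2)\<^sup>2 / 2 = - (\<epsilon> * t / 8) * (- 2 * \<theta> + (norm \<xi>)\<^sup>2)\<^sup>2"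
      for \<xi> :: 'a
      by (simp add: power2_eq_square field_simps)
    have inner: "(LINT s|lborel. k s \<xi>) = exp (- (\<epsilon> * t) * (\<theta> - (norm \<xi>)\<^sup>2 / 2)\<^sup>2 / 2) * \<psi> \<xi>" for \<xi>
      using char_normal_density[of "sqrt (\<epsilon> * t)" "\<theta> - (norm \<xi>)\<^sup>2 / 2"] \<open>0 < \<epsilon> * t\<close>
      by (simp add: k_def \<rho>_def mult_ac)
    show ?thesis
      unfolding inner exponent c_def by (simp add: mult.assoc flip: integral_mult_right_zero)
  qed
  finally show ?thesis .
qed

theorem lemma2p1:
  fixes t \<epsilon> \<theta> :: real
  assumes "t > 0" and "\<epsilon> > 0"
  shows "(\<forall>\<xi>::'a::euclidean_space.
            fourier (\<lambda>x. complex_of_real (btbm_kernel t x)) \<xi> =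
            complex_of_real ((2 * pi) powr (- real DIM('a) / 2) * exp (t / 8 * (norm \<xi>) ^ 4)
              * (2 / sqrt pi * (LINT \<tau>:{sqrt (2 * t) * (norm \<xi>)\<^sup>2 / 4..}|lborel. exp (- \<tau>\<^sup>2)))))
       \<and> (\<forall>\<psi>::'a \<Rightarrow> complex. integrable lborel \<psi> \<longrightarrow> integrable lborel (fourier \<psi>) \<longrightarrow>
            lks_pairing \<epsilon> \<theta> t (fourier \<psi>) =
            (LINT \<xi>|lborel. complex_of_real ((2 * pi) powr (- real DIM('a) / 2)
                 * exp (- (\<epsilon> * t / 8) * (- 2 * \<theta> + (norm \<xi>)\<^sup>2)\<^sup>2)) * \<psi> \<xi>))"
  using fourier_btbm_kernel[OF assms(1)] lks_pairing_fourier[OF assms] by blast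

end
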